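(* Let $m,p\ge1$, let $\mathbf{X}=(X_1,\dots,X_p)$ take values in $\mathbb{X}^p$ with $|\mathbb{X}|=m$, and $Y$ in $\{0,1\}$, so that joint distributions of $(\mathbf{X},Y)$ are identified with probability vectors $\mathbf{p}\in\mathbb{R}_+^{2m^p}$, $\mathbf{1}^T\mathbf{p}=1$. Let $\tilde{\mathbf{p}}$ be the uniform probability vector. Then there exists $\epsilon>0$ such that for every probability vector $\mathbf{p}$ with $\|\mathbf{p}-\tilde{\mathbf{p}}\|_1<\epsilon$, the class $\mathcal{C}(\mathbf{p})$ contains a distribution $\hat{\mathbb{P}}$ for which there exist functions $f_i:\mathbb{X}\to\mathbb{R}$, $i=1,\dots,p$, with $\mathbb{E}_{\hat{\mathbb{P}}}[Y\mid\mathbf{X}]=\sum_{i=1}^p f_i(X_i)$.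
   Context: For a probability vector $\mathbf{p}$, $\mathcal{C}(\mathbf{p})$ denotes the class of all joint distributions of $(\mathbf{X},Y)$ having the same pairwise marginals as $\mathbf{p}$, i.e. the same values of $\mathbb{P}(X_i=x_i,X_j=x_j)$ and $\mathbb{P}(X_i=x_i,Y=y)$ for all $i,j\in\{1,\dots,p\}$, $x_i,x_j\in\mathbb{X}$, $y\in\{0,1\}$. *)

theory Defs
  imports Complex_Main "HOL-Library.FuncSet"
begin

text \<open>Feature values range over a finite type 'x with m = CARD('x) \<ge> 1 elements.
  A feature vector X = (X_0,...,X_{p-1}) is a function nat \<Rightarrow> 'x restricted to {..<p}
  (extensional, i.e. an element of PiE {..<p} (\<lambda>_. UNIV)); the label Y \<in> {0,1}
  is encoded as bool (True = 1).\<close>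

definition Xspace :: "nat \<Rightarrow> (nat \<Rightarrow> 'x) set" where
  "Xspace p = PiE {..<p} (\<lambda>_. UNIV)"

definition Omega :: "nat \<Rightarrow> ((nat \<Rightarrow> 'x) \<times> bool) set" where
  "Omega p = Xspace p \<times> UNIV"

definition is_prob_vec :: "nat \<Rightarrow> ((nat \<Rightarrow> 'x) \<times> bool \<Rightarrow> real) \<Rightarrow> bool" where
  "is_prob_vec p P \<longleftrightarrow> (\<forall>\<omega>\<in>Omega p. P \<omega> \<ge> 0) \<and> (\<Sum>\<omega>\<in>Omega p. P \<omega>) = 1"

definition uniform_vec :: "nat \<Rightarrow> (nat \<Rightarrow> 'x::finite) \<times> bool \<Rightarrow> real" where
  "uniform_vec p \<omega> = 1 / (2 * real (card (UNIV :: 'x set)) ^ p)"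

definition l1_dist :: "nat \<Rightarrow> ((nat \<Rightarrow> 'x) \<times> bool \<Rightarrow> real) \<Rightarrow> ((nat \<Rightarrow> 'x) \<times> bool \<Rightarrow> real) \<Rightarrow> real" where
  "l1_dist p P Q = (\<Sum>\<omega>\<in>Omega p. \<bar>P \<omega> - Q \<omega>\<bar>)"

definition margXX :: "nat \<Rightarrow> ((nat \<Rightarrow> 'x) \<times> bool \<Rightarrow> real) \<Rightarrow> nat \<Rightarrow> nat \<Rightarrow> 'x \<Rightarrow> 'x \<Rightarrow> real" where
  "margXX p P i j a b = (\<Sum>\<omega>\<in>{\<omega>\<in>Omega p. fst \<omega> i = a \<and> fst \<omega> j = b}. P \<omega>)"

definition margXY :: "nat \<Rightarrow> ((nat \<Rightarrow> 'x) \<times> bool \<Rightarrow> real) \<Rightarrow> nat \<Rightarrow> 'x \<Rightarrow> bool \<Rightarrow> real" where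
  "margXY p P i a y = (\<Sum>\<omega>\<in>{\<omega>\<in>Omega p. fst \<omega> i = a \<and> snd \<omega> = y}. P \<omega>)"

definition same_pairwise :: "nat \<Rightarrow> ((nat \<Rightarrow> 'x) \<times> bool \<Rightarrow> real) \<Rightarrow> ((nat \<Rightarrow> 'x) \<times> bool \<Rightarrow> real) set" where
  "same_pairwise p P = {Q. is_prob_vec p Q \<and>
     (\<forall>i<p. \<forall>j<p. \<forall>a b. margXX p Q i j a b = margXX p P i j a b) \<and>
     (\<forall>i<p. \<forall>a y. margXY p Q i a y = margXY p P i a y)}"

text \<open>E_Q[Y | X = x] = Q(x,1) / Q(X = x), defined where Q(X = x) > 0
  (conditional expectation is determined only almost surely).\<close>
definition cond_exp_Y :: "((nat \<Rightarrow> 'x) \<times> bool \<Rightarrow> real) \<Rightarrow> (nat \<Rightarrow> 'x) \<Rightarrow> real" where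
  "cond_exp_Y Q x = Q (x, True) / (Q (x, True) + Q (x, False))"

definition additive_regression :: "nat \<Rightarrow> ((nat \<Rightarrow> 'x) \<times> bool \<Rightarrow> real) \<Rightarrow> bool" where
  "additive_regression p Q \<longleftrightarrow> (\<exists>f :: nat \<Rightarrow> 'x \<Rightarrow> real.
     \<forall>x\<in>Xspace p. Q (x, True) + Q (x, False) > 0 \<longrightarrow> cond_exp_Y Q x = (\<Sum>i<p. f i (x i)))"

end

theory Submission
  imports Defs
begin

text \<open>Let \<open>r\<close> be the X-marginal of \<open>P\<close> and \<open>h = E[Y | X] - 1/2\<close>, and let \<open>g\<^sub>0\<close> be the
  \<open>r\<close>-weighted least-squares projection of \<open>h\<close> onto the additive functions
  \<open>\<Sum>\<^sub>i f\<^sub>i(x\<^sub>i)\<close>. Its normal equations say precisely that the distribution with X-marginal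
  \<open>r\<close> and regression function \<open>1/2 + g\<^sub>0\<close> has the same marginals \<open>P(X\<^sub>i = a, Y = y)\<close> as \<open>P\<close>;
  the marginals of pairs of features are untouched since \<open>r\<close> is kept. It remains to see that
  \<open>1/2 + g\<^sub>0\<close> takes values in \<open>[0, 1]\<close>: within \<open>\<ell>\<^sub>1\<close>-distance \<open>u = 1/(2m\<^sup>p)\<close> of the uniform
  distribution, \<open>r > u\<close> pointwise and the weighted norm of \<open>h\<close> is below \<open>u/4\<close>; projection does
  not increase this norm, hence \<open>|g\<^sub>0| < 1/2\<close>.\<close>

definition weighted_inner :: "('a \<Rightarrow> real) \<Rightarrow> 'a set \<Rightarrow> ('a \<Rightarrow> real) \<Rightarrow> ('a \<Rightarrow> real) \<Rightarrow> real" where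
  "weighted_inner r A f g = (\<Sum>x\<in>A. r x * f x * g x)"

lemma weighted_inner_commute: "weighted_inner r A f g = weighted_inner r A g f"
  unfolding weighted_inner_def by (simp add: mult_ac)

lemma weighted_inner_diff_left:
  "weighted_inner r A (\<lambda>x. f x - g x) h = weighted_inner r A f h - weighted_inner r A g h"
  unfolding weighted_inner_def by (simp add: algebra_simps sum_subtractf)

lemma weighted_inner_scale_left:
  "weighted_inner r A (\<lambda>x. c * f x) h = c * weighted_inner r A f h"
  unfolding weighted_inner_def by (simp add: sum_distrib_left mult_ac)

lemma weighted_inner_sum_left:
  "weighted_inner r A (\<lambda>x. \<Sum>j\<in>K. c j * \<phi> j x) h = (\<Sum>j\<in>K. c j * weighted_inner r A (\<phi> j) h)"
  unfolding weighted_inner_def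
  by (simp add: sum_distrib_left sum_distrib_right mult_ac sum.swap[of _ A])

lemma weighted_inner_sum_right:
  "weighted_inner r A h (\<lambda>x. \<Sum>j\<in>K. c j * \<phi> j x) = (\<Sum>j\<in>K. c j * weighted_inner r A h (\<phi> j))"
  by (simp add: weighted_inner_commute[of r A h] weighted_inner_sum_left)

lemma weighted_inner_add_right:
  "weighted_inner r A h (\<lambda>x. f x + g x) = weighted_inner r A h f + weighted_inner r A h g"
  unfolding weighted_inner_def by (simp add: algebra_simps sum.distrib)

lemma weighted_inner_self_nonneg:
  assumes "\<forall>x\<in>A. 0 \<le> r x"
  shows "0 \<le> weighted_inner r A f f"
  unfolding weighted_inner_def using assms
  by (intro sum_nonneg) (simp add: mult.assoc)

lemma weighted_inner_self_eq_0:
  assumes "finite A" "\<forall>x\<in>A. 0 \<le> r x" "weighted_inner r A f f = 0"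
  shows "weighted_inner r A f g = 0"
proof -
  have "\<forall>x\<in>A. r x * f x * f x = 0"
    using assms sum_nonneg_eq_0_iff[of A "\<lambda>x. r x * f x * f x"]
    unfolding weighted_inner_def by (simp add: mult.assoc)
  then show ?thesis unfolding weighted_inner_def by (auto intro!: sum.neutral)
qed

lemma weighted_projection_exists:
  fixes \<phi> :: "'k \<Rightarrow> 'a \<Rightarrow> real"
  assumes "finite K" "finite A" "\<forall>x\<in>A. 0 \<le> r x"
  shows "\<exists>c. \<forall>k\<in>K. weighted_inner r A (\<lambda>x. h x - (\<Sum>j\<in>K. c j * \<phi> j x)) (\<phi> k) = 0"
  using assms(1)
proof (induction K arbitrary: h rule: finite_induct)
  case empty
  then show ?case by simp
next
  case (insert t K)
  let ?ip = "weighted_inner r A"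
  obtain a where a: "\<forall>k\<in>K. ?ip (\<lambda>x. h x - (\<Sum>j\<in>K. a j * \<phi> j x)) (\<phi> k) = 0"
    using insert.IH by blast
  obtain b where b: "\<forall>k\<in>K. ?ip (\<lambda>x. \<phi> t x - (\<Sum>j\<in>K. b j * \<phi> j x)) (\<phi> k) = 0"
    using insert.IH by blast
  define e where "e x = h x - (\<Sum>j\<in>K. a j * \<phi> j x)" for x
  define s where "s x = \<phi> t x - (\<Sum>j\<in>K. b j * \<phi> j x)" for x
  \<comment> \<open>Gram--Schmidt step: correct the residual \<open>e\<close> along the part \<open>s\<close> of \<open>\<phi> t\<close>
     orthogonal to the old span.\<close>
  define c0 where "c0 = (if ?ip s s = 0 then 0 else ?ip e s / ?ip s s)"
  define c where "c j = (if j = t then c0 else a j - c0 * b j)" for j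
  have residual: "(\<lambda>x. h x - (\<Sum>j\<in>insert t K. c j * \<phi> j x)) = (\<lambda>x. e x - c0 * s x)"
  proof
    fix x
    have "(\<Sum>j\<in>K. c j * \<phi> j x) = (\<Sum>j\<in>K. (a j - c0 * b j) * \<phi> j x)"
      using insert.hyps(2) unfolding c_def by (intro sum.cong) auto
    also have "\<dots> = (\<Sum>j\<in>K. a j * \<phi> j x) - c0 * (\<Sum>j\<in>K. b j * \<phi> j x)"
      by (simp add: algebra_simps sum_subtractf sum_distrib_left)
    finally have "(\<Sum>j\<in>K. c j * \<phi> j x) = (\<Sum>j\<in>K. a j * \<phi> j x) - c0 * (\<Sum>j\<in>K. b j * \<phi> j x)" .
    then show "h x - (\<Sum>j\<in>insert t K. c j * \<phi> j x) = e x - c0 * s x"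
      using insert.hyps unfolding e_def s_def by (simp add: c_def algebra_simps)
  qed
  have orth_K: "?ip (\<lambda>x. e x - c0 * s x) (\<phi> k) = 0" if "k \<in> K" for k
    using a b that unfolding e_def s_def
    by (simp add: weighted_inner_diff_left weighted_inner_scale_left)
  have "?ip (\<lambda>x. e x - c0 * s x) s = ?ip e s - c0 * ?ip s s"
    by (simp only: weighted_inner_diff_left weighted_inner_scale_left)
  also have "\<dots> = 0"
    using weighted_inner_self_eq_0[OF assms(2,3), of s e] weighted_inner_commute[of r A s e]
    by (auto simp: c0_def)
  finally have orth_s: "?ip (\<lambda>x. e x - c0 * s x) s = 0" .
  have "\<phi> t = (\<lambda>x. s x + (\<Sum>j\<in>K. b j * \<phi> j x))"
    unfolding s_def by simp
  then have orth_t: "?ip (\<lambda>x. e x - c0 * s x) (\<phi> t) = 0"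
    using orth_s orth_K by (simp add: weighted_inner_add_right weighted_inner_sum_right)
  show ?case
    using orth_K orth_t by (intro exI[of _ c]) (simp add: residual)
qed

lemma weighted_projection_norm_le:
  assumes "\<forall>x\<in>A. 0 \<le> r x"
    and "\<forall>k\<in>K. weighted_inner r A (\<lambda>x. h x - (\<Sum>j\<in>K. c j * \<phi> j x)) (\<phi> k) = 0"
  defines "g \<equiv> \<lambda>x. \<Sum>j\<in>K. c j * \<phi> j x"
  shows "weighted_inner r A g g \<le> weighted_inner r A h h"
proof -
  define e where "e x = h x - g x" for x
  have "weighted_inner r A e g = 0"
    using assms(2) unfolding e_def g_def by (simp add: weighted_inner_sum_right)
  moreover have "weighted_inner r A h h = weighted_inner r A g g + weighted_inner r A e e + 2 * weighted_inner r A e g"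
    unfolding weighted_inner_def e_def by (simp add: algebra_simps sum.distrib sum_subtractf sum_distrib_left)
  ultimately show ?thesis
    using weighted_inner_self_nonneg[OF assms(1), of e] by linarith
qed

lemma sum_coordinate_indicators:
  fixes c :: "nat \<Rightarrow> 'x::finite \<Rightarrow> real"
  shows "(\<Sum>(i, b)\<in>{..<p} \<times> UNIV. c i b * (if x i = b then 1 else 0)) = (\<Sum>i<p. c i (x i))"
proof -
  have "(\<Sum>b\<in>UNIV. c i b * (if x i = b then 1 else 0)) = (\<Sum>b\<in>UNIV. if b = x i then c i b else 0)" for i
    by (intro sum.cong) auto
  then show ?thesis by (simp add: sum.cartesian_product[symmetric])
qed

lemma additive_projection_exists:
  fixes r h :: "(nat \<Rightarrow> 'x::finite) \<Rightarrow> real"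
  assumes "finite A" "\<forall>x\<in>A. 0 \<le> r x"
  obtains c :: "nat \<Rightarrow> 'x \<Rightarrow> real"
  where "\<forall>i<p. \<forall>b. (\<Sum>x\<in>{x\<in>A. x i = b}. r x * (h x - (\<Sum>i<p. c i (x i)))) = 0"
    and "weighted_inner r A (\<lambda>x. \<Sum>i<p. c i (x i)) (\<lambda>x. \<Sum>i<p. c i (x i)) \<le> weighted_inner r A h h"
proof -
  define K where "K = {..<p} \<times> (UNIV :: 'x set)"
  define \<phi> :: "nat \<times> 'x \<Rightarrow> (nat \<Rightarrow> 'x) \<Rightarrow> real"
    where "\<phi> = (\<lambda>(i, b) x. if x i = b then 1 else 0)"
  obtain c where c: "\<forall>k\<in>K. weighted_inner r A (\<lambda>x. h x - (\<Sum>j\<in>K. c j * \<phi> j x)) (\<phi> k) = 0"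
    using weighted_projection_exists[where K = K and A = A and r = r and h = h and \<phi> = \<phi>] assms unfolding K_def by auto
  have span: "(\<Sum>j\<in>K. c j * \<phi> j x) = (\<Sum>i<p. curry c i (x i))" for x
    using sum_coordinate_indicators[where p = p and c = "curry c" and x = x] unfolding K_def \<phi>_def
    by (simp add: case_prod_unfold)
  have "weighted_inner r A f (\<phi> (i, b)) = (\<Sum>x\<in>{x\<in>A. x i = b}. r x * f x)" for f i b
    unfolding weighted_inner_def \<phi>_def using assms(1) by (auto simp: sum.inter_filter intro!: sum.cong)
  then have "\<forall>i<p. \<forall>b. (\<Sum>x\<in>{x\<in>A. x i = b}. r x * (h x - (\<Sum>i<p. curry c i (x i)))) = 0"
    using c span unfolding K_def by auto
  moreover have "weighted_inner r A (\<lambda>x. \<Sum>i<p. curry c i (x i)) (\<lambda>x. \<Sum>i<p. curry c i (x i))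
      \<le> weighted_inner r A h h"
    using weighted_projection_norm_le[OF assms(2) c] by (simp add: span)
  ultimately show ?thesis using that by blast
qed

lemma abs_lt_of_weighted_inner_self_lt:
  assumes "finite A" "x \<in> A" "0 < u" "\<forall>y\<in>A. u \<le> r y" "0 \<le> c"
    and "weighted_inner r A g g < u * c\<^sup>2"
  shows "\<bar>g x\<bar> < c"
proof -
  have "u * (g x)\<^sup>2 \<le> r x * (g x)\<^sup>2"
    using assms(2,4) by (intro mult_right_mono) auto
  also have "\<dots> \<le> weighted_inner r A g g"
  proof -
    have "\<forall>y\<in>A. 0 \<le> r y * g y * g y"
      using assms(3,4) by (metis dual_order.trans less_imp_le mult.assoc mult_nonneg_nonneg zero_le_square)
    then show ?thesis
      unfolding weighted_inner_def power2_eq_square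
      using member_le_sum[OF assms(2), of "\<lambda>y. r y * g y * g y"] assms(1) by (simp add: mult.assoc)
  qed
  finally have "u * (g x)\<^sup>2 < u * c\<^sup>2"
    using assms(6) by linarith
  then have "(g x)\<^sup>2 < c\<^sup>2"
    using assms(3) by simp
  then show ?thesis
    using assms(5) by (simp add: power2_less_imp_less)
qed

lemma sq_diff_div_sum_le:
  fixes a b u :: real
  assumes "0 \<le> a" "0 \<le> b"
  shows "(a + b) * ((a - b) / (2 * (a + b)))\<^sup>2 \<le> (\<bar>a - u\<bar> + \<bar>b - u\<bar>) / 4"
proof (cases "a + b = 0")
  case False
  have "(a - b)\<^sup>2 = \<bar>a - b\<bar> * \<bar>a - b\<bar>"
    by (simp add: power2_eq_square abs_mult[symmetric])
  also have "\<dots> \<le> (\<bar>a - u\<bar> + \<bar>b - u\<bar>) * (a + b)"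
    using assms by (intro mult_mono) auto
  finally have "(a - b)\<^sup>2 / (4 * (a + b)) \<le> (\<bar>a - u\<bar> + \<bar>b - u\<bar>) * (a + b) / (4 * (a + b))"
    using assms by (intro divide_right_mono) auto
  moreover have "(a + b) * ((a - b) / (2 * (a + b)))\<^sup>2 = (a - b)\<^sup>2 / (4 * (a + b))"
    using False by (simp add: divide_simps power2_eq_square) (simp add: algebra_simps)
  moreover have "(\<bar>a - u\<bar> + \<bar>b - u\<bar>) * (a + b) / (4 * (a + b)) = (\<bar>a - u\<bar> + \<bar>b - u\<bar>) / 4"
    using False by (simp add: divide_simps)
  ultimately show ?thesis
    by linarith
qed simp

definition marginal_X :: "((nat \<Rightarrow> 'x) \<times> bool \<Rightarrow> real) \<Rightarrow> (nat \<Rightarrow> 'x) \<Rightarrow> real" where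
  "marginal_X P x = P (x, True) + P (x, False)"

definition regression_dist ::
    "((nat \<Rightarrow> 'x) \<times> bool \<Rightarrow> real) \<Rightarrow> ((nat \<Rightarrow> 'x) \<Rightarrow> real) \<Rightarrow> (nat \<Rightarrow> 'x) \<times> bool \<Rightarrow> real" where
  "regression_dist P g = (\<lambda>(x, y). (if y then g x else 1 - g x) * marginal_X P x)"

lemma finite_Xspace: "finite (Xspace p :: (nat \<Rightarrow> 'x::finite) set)"
  unfolding Xspace_def by (simp add: finite_PiE)

lemma sum_Omega_filter_fst:
  "sum F {\<omega>\<in>Omega p. C (fst \<omega>)} = (\<Sum>x\<in>{x\<in>Xspace p. C x}. marginal_X F x)"
proof -
  have "{\<omega>\<in>Omega p. C (fst \<omega>)} = {x\<in>Xspace p. C x} \<times> UNIV"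
    unfolding Omega_def by auto
  then have "sum F {\<omega>\<in>Omega p. C (fst \<omega>)} = (\<Sum>x\<in>{x\<in>Xspace p. C x}. \<Sum>y\<in>UNIV. F (x, y))"
    by (simp add: sum.cartesian_product)
  then show ?thesis
    by (simp add: marginal_X_def UNIV_bool add.commute)
qed

lemma sum_Omega: "sum F (Omega p) = (\<Sum>x\<in>Xspace p. marginal_X F x)"
  using sum_Omega_filter_fst[of F p "\<lambda>_. True"] by simp

lemma sum_Omega_filter_fst_snd:
  "sum F {\<omega>\<in>Omega p. C (fst \<omega>) \<and> snd \<omega> = y} = (\<Sum>x\<in>{x\<in>Xspace p. C x}. F (x, y))"
proof -
  have "{\<omega>\<in>Omega p. C (fst \<omega>) \<and> snd \<omega> = y} = (\<lambda>x. (x, y)) ` {x\<in>Xspace p. C x}"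
    unfolding Omega_def by auto
  then show ?thesis
    by (simp add: sum.reindex inj_on_def)
qed

lemma marginal_X_regression_dist [simp]: "marginal_X (regression_dist P g) = marginal_X P"
  by (simp add: fun_eq_iff marginal_X_def regression_dist_def algebra_simps)

lemma regression_dist_in_same_pairwise:
  assumes P: "is_prob_vec p P"
    and g: "\<forall>x\<in>Xspace p. 0 \<le> g x \<and> g x \<le> 1"
    and moments: "\<forall>i<p. \<forall>b. (\<Sum>x\<in>{x\<in>Xspace p. x i = b}. marginal_X P x * g x)
                          = (\<Sum>x\<in>{x\<in>Xspace p. x i = b}. P (x, True))"
  shows "regression_dist P g \<in> same_pairwise p P"
  unfolding same_pairwise_def
proof (intro CollectI conjI allI impI)
  have "marginal_X P x \<ge> 0" if "x \<in> Xspace p" for x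
    using P that unfolding is_prob_vec_def Omega_def marginal_X_def by auto
  moreover have "sum (regression_dist P g) (Omega p) = sum P (Omega p)"
    by (simp add: sum_Omega)
  ultimately show "is_prob_vec p (regression_dist P g)"
    using P g unfolding is_prob_vec_def by (auto simp: Omega_def regression_dist_def)
next
  fix i j a b
  show "margXX p (regression_dist P g) i j a b = margXX p P i j a b"
    unfolding margXX_def sum_Omega_filter_fst[where C = "\<lambda>x. x i = a \<and> x j = b"] by simp
next
  fix i a y
  assume "i < p"
  then have "(\<Sum>x\<in>{x\<in>Xspace p. x i = a}. g x * marginal_X P x)
           = (\<Sum>x\<in>{x\<in>Xspace p. x i = a}. P (x, True))"
    using moments by (simp add: mult.commute)
  then show "margXY p (regression_dist P g) i a y = margXY p P i a y"
    unfolding margXY_def sum_Omega_filter_fst_snd[where C = "\<lambda>x. x i = a"]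
    by (cases y) (simp_all add: regression_dist_def left_diff_distrib sum_subtractf marginal_X_def sum.distrib)
qed

lemma additive_regression_regression_dist:
  assumes "\<forall>x\<in>Xspace p. g x = (\<Sum>i<p. f i (x i))"
  shows "additive_regression p (regression_dist P g)"
  unfolding additive_regression_def
proof (intro exI[of _ f] ballI impI)
  fix x
  assume "x \<in> Xspace p" and "regression_dist P g (x, True) + regression_dist P g (x, False) > 0"
  then have nonzero: "marginal_X P x \<noteq> 0"
    by (metis marginal_X_def marginal_X_regression_dist less_irrefl)
  have "cond_exp_Y (regression_dist P g) x = regression_dist P g (x, True) / marginal_X P x"
    unfolding cond_exp_Y_def marginal_X_regression_dist[of P g, symmetric] marginal_X_def ..
  also have "\<dots> = g x"
    using nonzero by (simp add: regression_dist_def)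
  finally show "cond_exp_Y (regression_dist P g) x = (\<Sum>i<p. f i (x i))"
    using assms \<open>x \<in> Xspace p\<close> by simp
qed

lemma l1_dist_const:
  "l1_dist p P (\<lambda>_. u) = (\<Sum>x\<in>Xspace p. \<bar>P (x, True) - u\<bar> + \<bar>P (x, False) - u\<bar>)"
  unfolding l1_dist_def sum_Omega marginal_X_def ..

lemma marginal_X_gt_of_l1_dist_const_lt:
  fixes P :: "(nat \<Rightarrow> 'x::finite) \<times> bool \<Rightarrow> real"
  assumes "l1_dist p P (\<lambda>_. u) < u" "x \<in> Xspace p"
  shows "u < marginal_X P x"
proof -
  have "\<bar>P (x, True) - u\<bar> + \<bar>P (x, False) - u\<bar> \<le> l1_dist p P (\<lambda>_. u)"
    unfolding l1_dist_const
    by (rule member_le_sum[OF assms(2) _ finite_Xspace]) simp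
  then show ?thesis
    using assms(1) unfolding marginal_X_def by linarith
qed

lemma weighted_inner_centered_regression_lt:
  fixes P :: "(nat \<Rightarrow> 'x::finite) \<times> bool \<Rightarrow> real"
  assumes "is_prob_vec p P" "l1_dist p P (\<lambda>_. u) < u"
  defines "h \<equiv> \<lambda>x. (P (x, True) - P (x, False)) / (2 * marginal_X P x)"
  shows "weighted_inner (marginal_X P) (Xspace p) h h < u / 4"
proof -
  have "weighted_inner (marginal_X P) (Xspace p) h h
      \<le> (\<Sum>x\<in>Xspace p. (\<bar>P (x, True) - u\<bar> + \<bar>P (x, False) - u\<bar>) / 4)"
    unfolding weighted_inner_def h_def
  proof (rule sum_mono)
    fix x :: "nat \<Rightarrow> 'x"
    assume "x \<in> Xspace p"
    then have "0 \<le> P (x, True)" "0 \<le> P (x, False)"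
      using assms(1) unfolding is_prob_vec_def Omega_def by auto
    then show "marginal_X P x * ((P (x, True) - P (x, False)) / (2 * marginal_X P x))
                 * ((P (x, True) - P (x, False)) / (2 * marginal_X P x))
               \<le> (\<bar>P (x, True) - u\<bar> + \<bar>P (x, False) - u\<bar>) / 4"
      using sq_diff_div_sum_le[of "P (x, True)" "P (x, False)" u]
      by (simp add: marginal_X_def power2_eq_square mult.assoc)
  qed
  also have "\<dots> = l1_dist p P (\<lambda>_. u) / 4"
    by (simp add: l1_dist_const sum_divide_distrib)
  finally show ?thesis
    using assms(2) by simp
qed

lemma additive_fit_of_l1_dist_const_lt:
  fixes P :: "(nat \<Rightarrow> 'x::finite) \<times> bool \<Rightarrow> real"
  assumes "p \<ge> 1" and P: "is_prob_vec p P" and near: "l1_dist p P (\<lambda>_. u) < u"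
  obtains g f where "\<forall>x\<in>Xspace p. 0 \<le> g x \<and> g x \<le> 1"
    and "\<forall>i<p. \<forall>b. (\<Sum>x\<in>{x\<in>Xspace p. x i = b}. marginal_X P x * g x)
                  = (\<Sum>x\<in>{x\<in>Xspace p. x i = b}. P (x, True))"
    and "\<forall>x\<in>Xspace p. g x = (\<Sum>i<p. f i (x i))"
proof -
  have "0 \<le> l1_dist p P (\<lambda>_. u)"
    unfolding l1_dist_def by (simp add: sum_nonneg)
  with near have "0 < u"
    by linarith
  define r where "r = marginal_X P"
  define h where "h x = (P (x, True) - P (x, False)) / (2 * r x)" for x
  have r_gt: "\<forall>x\<in>Xspace p. u < r x"
    using marginal_X_gt_of_l1_dist_const_lt[OF near] unfolding r_def by blast
  then have r_ge: "\<forall>x\<in>Xspace p. u \<le> r x" and r_pos: "\<forall>x\<in>Xspace p. 0 < r x"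
    and r_nonneg: "\<forall>x\<in>Xspace p. 0 \<le> r x"
    using \<open>0 < u\<close> by auto
  obtain c where moments: "\<forall>i<p. \<forall>b. (\<Sum>x\<in>{x\<in>Xspace p. x i = b}. r x * (h x - (\<Sum>i<p. c i (x i)))) = 0"
    and norm: "weighted_inner r (Xspace p) (\<lambda>x. \<Sum>i<p. c i (x i)) (\<lambda>x. \<Sum>i<p. c i (x i))
                 \<le> weighted_inner r (Xspace p) h h"
    by (rule additive_projection_exists[OF finite_Xspace r_nonneg])
  define g where "g x = 1 / 2 + (\<Sum>i<p. c i (x i))" for x
  have "weighted_inner r (Xspace p) h h < u * (1 / 2)\<^sup>2"
    using weighted_inner_centered_regression_lt[OF P near] unfolding r_def h_def by (simp add: power2_eq_square)
  then have bound: "\<bar>\<Sum>i<p. c i (x i)\<bar> < 1 / 2" if "x \<in> Xspace p" for x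
    using norm by (intro abs_lt_of_weighted_inner_self_lt[OF finite_Xspace that \<open>0 < u\<close> r_ge]) auto
  have g_range: "\<forall>x\<in>Xspace p. 0 \<le> g x \<and> g x \<le> 1"
    using bound unfolding g_def by (fastforce simp: abs_less_iff)
  have g_weighted: "r x * g x = P (x, True) - r x * (h x - (\<Sum>i<p. c i (x i)))" if "x \<in> Xspace p" for x
  proof -
    have "r x * h x = (P (x, True) - P (x, False)) / 2"
      using r_pos that unfolding h_def by (simp add: less_imp_neq[symmetric])
    then show ?thesis
      unfolding g_def r_def marginal_X_def by (simp add: algebra_simps)
  qed
  have g_moments: "\<forall>i<p. \<forall>b. (\<Sum>x\<in>{x\<in>Xspace p. x i = b}. r x * g x) = (\<Sum>x\<in>{x\<in>Xspace p. x i = b}. P (x, True))"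
  proof (intro allI impI)
    fix i b
    assume "i < p"
    have "(\<Sum>x\<in>{x\<in>Xspace p. x i = b}. r x * g x)
        = (\<Sum>x\<in>{x\<in>Xspace p. x i = b}. P (x, True) - r x * (h x - (\<Sum>i<p. c i (x i))))"
      by (rule sum.cong) (simp_all add: g_weighted)
    then show "(\<Sum>x\<in>{x\<in>Xspace p. x i = b}. r x * g x) = (\<Sum>x\<in>{x\<in>Xspace p. x i = b}. P (x, True))"
      using moments \<open>i < p\<close> by (simp add: sum_subtractf)
  qed
  have g_additive: "\<forall>x\<in>Xspace p. g x = (\<Sum>i<p. c i (x i) + (if i = 0 then 1 / 2 else 0))"
    using \<open>p \<ge> 1\<close> unfolding g_def by (simp add: sum.distrib)
  show ?thesis
    using that[OF g_range g_moments[unfolded r_def] g_additive] .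
qed

theorem theorem5:
  fixes p :: nat
  assumes "p \<ge> 1"
  shows "\<exists>\<epsilon>>0. \<forall>P :: (nat \<Rightarrow> 'x::finite) \<times> bool \<Rightarrow> real.
           is_prob_vec p P \<and> l1_dist p P (uniform_vec p) < \<epsilon> \<longrightarrow>
           (\<exists>Q\<in>same_pairwise p P. additive_regression p Q)"
proof -
  define u :: real where "u = 1 / (2 * real (card (UNIV :: 'x set)) ^ p)"
  have "0 < u"
    unfolding u_def by (simp add: finite_UNIV_card_ge_0)
  moreover have "(uniform_vec p :: (nat \<Rightarrow> 'x) \<times> bool \<Rightarrow> real) = (\<lambda>_. u)"
    unfolding u_def uniform_vec_def by (simp add: fun_eq_iff)
  moreover have "\<exists>Q\<in>same_pairwise p P. additive_regression p Q"
    if P: "is_prob_vec p P" and near: "l1_dist p P (\<lambda>_. u) < u" for P :: "(nat \<Rightarrow> 'x) \<times> bool \<Rightarrow> real"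
  proof -
    obtain g f where "\<forall>x\<in>Xspace p. 0 \<le> g x \<and> g x \<le> 1"
      and "\<forall>i<p. \<forall>b. (\<Sum>x\<in>{x\<in>Xspace p. x i = b}. marginal_X P x * g x)
                    = (\<Sum>x\<in>{x\<in>Xspace p. x i = b}. P (x, True))"
      and "\<forall>x\<in>Xspace p. g x = (\<Sum>i<p. f i (x i))"
      using additive_fit_of_l1_dist_const_lt[OF assms P near] by blast
    then show ?thesis
      using regression_dist_in_same_pairwise[OF P] additive_regression_regression_dist by blast
  qed
  ultimately show ?thesis
    by (intro exI[of _ u]) auto
qed

end
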